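(* Let $n\ge m$ and $\ell,N,p,q,K\in\mathbb{N}$. Let $\mathcal{S}=\{x\in\mathbb{R}^n : Fx\le\mathbf{1}_p\}$ be a C-polytope with $F\in\mathbb{R}^{p\times n}$ of full column rank and vertices $x_1,\dots,x_N$, and let $\mathscr{U}=\{u\in\mathbb{R}^m: Hu\le\mathbf{1}_q\}$ be a C-polytope with $H\in\mathbb{R}^{q\times m}$ of full column rank. Let $\delta^{(1)},\dots,\delta^{(K)}\in\mathbb{R}^\ell$ be given, with associated matrices $A(\delta^{(j)})\in\mathbb{R}^{n\times n}$, $B(\delta^{(j)})\in\mathbb{R}^{n\times m}$. For each $j$ set $G^{(j)}=\begin{bmatrix}H\\ FB(\delta^{(j)})\end{bmatrix}$ and $l^{(i,j)}=\begin{bmatrix}\mathbf{1}_q\\ \mathbf{1}_p-FA(\delta^{(j)})x_i\end{bmatrix}$. Let $$\mathcal{L}_{\delta_K}=\{(C_1,\dots,C_N,d_1,\dots,d_N): C_i\in\mathbb{R}^{m\times\ell},\ d_i\in\mathbb{R}^m,\ C_i\delta^{(j)}+d_i\in\mathscr{U},\ A(\delta^{(j)})x_i+B(\delta^{(j)})(C_i\delta^{(j)}+d_i)\in\mathcal{S}\ \forall i,\ \forall j\}.$$ If $\mathcal{L}_{\delta_K}\neq\emptyset$, then for every $i\in\{1,\dots,N\}$ and $j\in\{1,\dots,K\}$ there exist index sets $\mathcal{Q}\subset\{1,\dots,q\}$, $\mathcal{P}\subset\{1,\dots,p\}$ such that the submatrix $G^{(j)}_{\mathcal{Q}\cup\mathcal{P}}\in\mathbb{R}^{m\times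 m}$ (rows $\mathcal{Q}$ of $H$ and rows $\mathcal{P}$ of $FB(\delta^{(j)})$) is invertible and $$(H)_k\,(G^{(j)}_{\mathcal{Q}\cup\mathcal{P}})^{-1}\,l^{(i,j)}_{\mathcal{Q}\cup\mathcal{P}}\le 1\quad\forall k\in\{1,\dots,q\}\setminus\mathcal{Q},$$ $$(FB(\delta^{(j)}))_k\,(G^{(j)}_{\mathcal{Q}\cup\mathcal{P}})^{-1}\,l^{(i,j)}_{\mathcal{Q}\cup\mathcal{P}}\le 1-(FA(\delta^{(j)})x_i)_k\quad\forall k\in\{1,\dots,p\}\setminus\mathcal{P}.$$
   Context: A C-polytope is a convex bounded polyhedron containing the origin in its interior. $(P)_k$ denotes the $k$-th row of a matrix $P$; for an index set $\mathcal{I}$, $P_{\mathcal{I}}$ (resp. $y_{\mathcal{I}}$) denotes the submatrix (subvector) of rows (entries) indexed by $\mathcal{I}$. $\mathbf{1}_p$ is the all-ones vector in $\mathbb{R}^p$. *)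

theory Defs
  imports "HOL-Analysis.Analysis"
begin

definition c_polytope :: "('a::euclidean_space) set \<Rightarrow> bool" where
  "c_polytope S \<longleftrightarrow> polytope S \<and> 0 \<in> interior S"

definition ones :: "real^'k" where
  "ones = (\<chi> k. 1)"

definition Gmat :: "real^'m^'q \<Rightarrow> real^'n^'p \<Rightarrow> real^'m^'n \<Rightarrow> real^'m^('q + 'p)" where
  "Gmat H F B = (\<chi> r. case r of Inl k \<Rightarrow> H $ k | Inr k \<Rightarrow> (F ** B) $ k)"

definition lvec :: "real^'n^'p \<Rightarrow> real^'n^'n \<Rightarrow> real^'n \<Rightarrow> real^('q::finite + 'p)" where
  "lvec F A x = (\<chi> r. case r of Inl k \<Rightarrow> 1 | Inr k \<Rightarrow> 1 - (F ** A *v x) $ k)"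

text \<open>Row-submatrix / subvector selected via an enumeration sigma of the chosen rows.\<close>
definition submat :: "real^'c^'r \<Rightarrow> ('s \<Rightarrow> 'r) \<Rightarrow> real^'c^'s" where
  "submat G \<sigma> = (\<chi> s. G $ \<sigma> s)"

definition subvec :: "real^'r \<Rightarrow> ('s \<Rightarrow> 'r) \<Rightarrow> real^'s" where
  "subvec v \<sigma> = (\<chi> s. v $ \<sigma> s)"

end

theory Submission
  imports Defs
begin

text \<open>For fixed \<open>i, j\<close> the admissible inputs form the polyhedron
  \<open>{u. G u \<le> l}\<close> with \<open>G = [H; F B(\<delta>\<^sub>j)]\<close> and
  \<open>l = [1; 1 - F A(\<delta>\<^sub>j) x\<^sub>i]\<close>. It is nonempty because
  \<open>C\<^sub>i \<delta>\<^sub>j + d\<^sub>i\<close> lies in it, and pointed because \<open>H\<close> has full column rank,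
  so it has a vertex: a feasible point whose active rows span \<open>\<real>\<^sup>m\<close>. Any \<open>m\<close>
  linearly independent active rows form the invertible submatrix, and the vertex is recovered
  by solving the corresponding square system. A vertex is found by taking a feasible point
  whose active rows span a space of maximal dimension: if that dimension were less than
  \<open>m\<close>, moving along a direction orthogonal to the active rows until a new
  constraint becomes tight would increase it.\<close>

definition active_constraints :: "('r \<Rightarrow> 'a::real_inner) \<Rightarrow> ('r \<Rightarrow> real) \<Rightarrow> 'a \<Rightarrow> 'r set" where
  "active_constraints g b u = {r. g r \<bullet> u = b r}"

lemma feasible_ray_hits_constraint:
  fixes g :: "'r::finite \<Rightarrow> 'a::real_inner"
  assumes feasible: "\<forall>r. g r \<bullet> u \<le> b r" and ascent: "g r0 \<bullet> w > 0"
  obtains t rs where "t \<ge> 0" "g rs \<bullet> w > 0" "g rs \<bullet> (u + t *\<^sub>R w) = b rs"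
    "\<forall>r. g r \<bullet> (u + t *\<^sub>R w) \<le> b r"
proof -
  define T where "T = {r. g r \<bullet> w > 0}"
  define step where "step r = (b r - g r \<bullet> u) / (g r \<bullet> w)" for r
  have "T \<noteq> {}"
    using ascent unfolding T_def by blast
  then obtain rs where rs: "rs \<in> T" and step_min: "\<And>r. r \<in> T \<Longrightarrow> step rs \<le> step r"
    by (metis arg_min_if_finite finite not_le)
  show thesis
  proof
    show "step rs \<ge> 0" "g rs \<bullet> w > 0"
      using rs feasible unfolding T_def step_def by auto
    show "g rs \<bullet> (u + step rs *\<^sub>R w) = b rs"
      using rs unfolding T_def step_def by (simp add: inner_add_right)
    show "\<forall>r. g r \<bullet> (u + step rs *\<^sub>R w) \<le> b r"
    proof
      fix r
      show "g r \<bullet> (u + step rs *\<^sub>R w) \<le> b r"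
      proof (cases "r \<in> T")
        case True
        then have "step rs * (g r \<bullet> w) \<le> step r * (g r \<bullet> w)"
          using step_min unfolding T_def by (simp add: mult_right_mono)
        with True show ?thesis unfolding T_def step_def by (simp add: inner_add_right)
      next
        case False
        then have "step rs * (g r \<bullet> w) \<le> 0"
          using \<open>step rs \<ge> 0\<close> unfolding T_def by (simp add: mult_nonneg_nonpos)
        with feasible[rule_format, of r] show ?thesis by (simp add: inner_add_right)
      qed
    qed
  qed
qed

lemma active_span_dim_increase:
  fixes g :: "'r::finite \<Rightarrow> 'a::euclidean_space"
  assumes feasible: "\<forall>r. g r \<bullet> u \<le> b r"
    and pointed: "\<And>w. w \<noteq> 0 \<Longrightarrow> \<exists>r. g r \<bullet> w \<noteq> 0"
    and deficient: "dim (g ` active_constraints g b u) < DIM('a)"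
  obtains u' where "\<forall>r. g r \<bullet> u' \<le> b r"
    "dim (g ` active_constraints g b u) < dim (g ` active_constraints g b u')"
proof -
  let ?V = "g ` active_constraints g b u"
  obtain w0 where "w0 \<noteq> 0" and w0_orth: "\<And>y. y \<in> span ?V \<Longrightarrow> orthogonal w0 y"
    using orthogonal_to_subspace_exists[OF deficient] by blast
  then obtain r0 where "g r0 \<bullet> w0 \<noteq> 0"
    using pointed by blast
  define w where "w = (if g r0 \<bullet> w0 > 0 then w0 else - w0)"
  have ascent: "g r0 \<bullet> w > 0"
    using \<open>g r0 \<bullet> w0 \<noteq> 0\<close> unfolding w_def by auto
  have w_orth: "y \<bullet> w = 0" if "y \<in> span ?V" for y
    using w0_orth[OF that] unfolding w_def orthogonal_def by (auto simp: inner_commute)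
  obtain t rs where feasible': "\<forall>r. g r \<bullet> (u + t *\<^sub>R w) \<le> b r" and rs: "g rs \<bullet> w > 0"
    "g rs \<bullet> (u + t *\<^sub>R w) = b rs"
    using feasible_ray_hits_constraint[OF feasible ascent] by blast
  have "dim ?V < dim (g ` active_constraints g b (u + t *\<^sub>R w))"
  proof -
    have "g rs \<notin> span ?V"
      using w_orth[of "g rs"] rs(1) by auto
    then have "dim ?V < dim (insert (g rs) ?V)"
      by (simp add: dim_insert)
    also have "\<dots> \<le> dim (g ` active_constraints g b (u + t *\<^sub>R w))"
    proof (rule dim_subset)
      have "g r \<bullet> (u + t *\<^sub>R w) = b r" if "r \<in> active_constraints g b u" for r
        using that w_orth[of "g r"] by (simp add: active_constraints_def inner_add_right span_base)
      with rs(2) show "insert (g rs) ?V \<subseteq> g ` active_constraints g b (u + t *\<^sub>R w)"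
        unfolding active_constraints_def by blast
    qed
    finally show ?thesis .
  qed
  with feasible' show thesis
    by (rule that)
qed

lemma exists_vertex_of_pointed_polyhedron:
  fixes g :: "'r::finite \<Rightarrow> 'a::euclidean_space"
  assumes feasible: "\<forall>r. g r \<bullet> u0 \<le> b r"
    and pointed: "\<And>w. w \<noteq> 0 \<Longrightarrow> \<exists>r. g r \<bullet> w \<noteq> 0"
  obtains u where "\<forall>r. g r \<bullet> u \<le> b r" "dim (g ` active_constraints g b u) = DIM('a)"
proof -
  let ?D = "\<lambda>u. dim (g ` active_constraints g b u)"
  have "\<forall>u. (\<forall>r. g r \<bullet> u \<le> b r) \<longrightarrow> ?D u < Suc DIM('a)"
    by (simp add: less_Suc_eq_le dim_subset_UNIV)
  from ex_has_greatest_nat[of "\<lambda>u. \<forall>r. g r \<bullet> u \<le> b r", OF feasible this]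
  obtain u where u: "\<forall>r. g r \<bullet> u \<le> b r"
    and u_max: "\<And>v. \<forall>r. g r \<bullet> v \<le> b r \<Longrightarrow> ?D v \<le> ?D u"
    by blast
  have "\<not> ?D u < DIM('a)"
  proof
    assume "?D u < DIM('a)"
    then obtain v where v: "\<forall>r. g r \<bullet> v \<le> b r" and "?D u < ?D v"
      using active_span_dim_increase[OF u pointed] by blast
    with u_max[OF v] show False
      by simp
  qed
  with dim_subset_UNIV[of "g ` active_constraints g b u"] have "?D u = DIM('a)"
    by linarith
  with u show thesis
    by (rule that)
qed

lemma exists_invertible_row_submatrix:
  fixes G :: "real^'m^'r::finite"
  assumes "dim ((\<lambda>r. G $ r) ` S) = CARD('m)"
  obtains \<sigma> :: "'m \<Rightarrow> 'r" where "inj \<sigma>" "range \<sigma> \<subseteq> S" "invertible (submat G \<sigma>)"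
proof -
  obtain V where V: "V \<subseteq> (\<lambda>r. G $ r) ` S" "independent V" "card V = CARD('m)"
    using basis_exists[of "(\<lambda>r. G $ r) ` S"] assms by metis
  then obtain R where R: "R \<subseteq> S" "inj_on (\<lambda>r. G $ r) R" "V = (\<lambda>r. G $ r) ` R"
    by (auto simp: subset_image_inj)
  with V(3) have "card R = CARD('m)"
    by (simp add: card_image)
  then obtain \<sigma> :: "'m \<Rightarrow> 'r" where \<sigma>: "bij_betw \<sigma> UNIV R"
    by (metis bij_betw_iff_card finite finite_subset subset_UNIV)
  have "rows (submat G \<sigma>) = V"
    using \<sigma> R(3) unfolding rows_def row_def submat_def bij_betw_def by (auto simp: vec_lambda_eta)
  with V(2,3) have "rank (submat G \<sigma>) = CARD('m)"
    by (simp add: row_rank_def dim_eq_card_independent)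
  then have "invertible (submat G \<sigma>)"
    by (simp add: full_rank_injective invertible_left_inverse matrix_left_invertible_injective)
  with \<sigma> R(1) show thesis
    by (intro that) (auto simp: bij_betw_def)
qed

lemma matrix_inv_mult_vector_cancel:
  fixes M :: "real^'n^'n"
  assumes "invertible M"
  shows "matrix_inv M *v (M *v u) = u"
proof -
  have "matrix_inv M ** M = mat 1"
    using assms unfolding invertible_def matrix_inv_def by (rule someI2_ex) auto
  then show ?thesis
    by (metis matrix_vector_mul_assoc matrix_vector_mul_lid)
qed

lemma exists_basic_feasible_solution:
  fixes G :: "real^'m^'r::finite" and l :: "real^'r"
  assumes feasible: "G *v u0 \<le> l" and injective: "inj ((*v) G)"
  obtains \<sigma> :: "'m \<Rightarrow> 'r" where "inj \<sigma>" "invertible (submat G \<sigma>)"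
    "G *v (matrix_inv (submat G \<sigma>) *v subvec l \<sigma>) \<le> l"
proof -
  let ?g = "\<lambda>r. G $ r" and ?b = "\<lambda>r. l $ r"
  have feasible_iff: "G *v u \<le> l \<longleftrightarrow> (\<forall>r. ?g r \<bullet> u \<le> ?b r)" for u
    by (simp add: less_eq_vec_def matrix_vector_mul_component)
  have pointed: "\<exists>r. ?g r \<bullet> w \<noteq> 0" if "w \<noteq> 0" for w
  proof -
    have "G *v w \<noteq> 0"
      using injective that by (metis injD matrix_vector_mult_0_right)
    then show ?thesis
      by (metis matrix_vector_mul_component vec_eq_iff zero_index)
  qed
  from feasible have "\<forall>r. ?g r \<bullet> u0 \<le> ?b r"
    unfolding feasible_iff .
  then obtain u where "\<forall>r. ?g r \<bullet> u \<le> ?b r"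
    and "dim (?g ` active_constraints ?g ?b u) = DIM(real^'m)"
    using exists_vertex_of_pointed_polyhedron[OF _ pointed] by blast
  then have u: "G *v u \<le> l" and vertex: "dim (?g ` active_constraints ?g ?b u) = CARD('m)"
    by (simp_all add: feasible_iff)
  from vertex obtain \<sigma> :: "'m \<Rightarrow> 'r" where "inj \<sigma>" "range \<sigma> \<subseteq> active_constraints ?g ?b u"
    and invertible: "invertible (submat G \<sigma>)"
    by (rule exists_invertible_row_submatrix)
  then have "submat G \<sigma> *v u = subvec l \<sigma>"
    by (auto simp: vec_eq_iff submat_def subvec_def matrix_vector_mul_component active_constraints_def)
  with u invertible have "G *v (matrix_inv (submat G \<sigma>) *v subvec l \<sigma>) \<le> l"
    by (metis matrix_inv_mult_vector_cancel)
  with \<open>inj \<sigma>\<close> invertible show thesis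
    by (rule that)
qed

lemma image_Inl_vimage_Un_image_Inr_vimage: "Inl ` (Inl -` R) \<union> Inr ` (Inr -` R) = R"
proof (rule set_eqI)
  fix r :: "'a + 'b"
  show "r \<in> Inl ` (Inl -` R) \<union> Inr ` (Inr -` R) \<longleftrightarrow> r \<in> R"
    by (cases r) auto
qed

lemma less_eq_ones_iff: "v \<le> (ones :: real^'k) \<longleftrightarrow> (\<forall>k. v $ k \<le> 1)"
  by (simp add: less_eq_vec_def ones_def)

lemma Gmat_mult_le_lvec_iff:
  "Gmat H F B *v v \<le> (lvec F A x :: real^('q::finite + 'p::finite)) \<longleftrightarrow>
     (\<forall>k. (H *v v) $ k \<le> 1) \<and> (\<forall>k. (F ** B *v v) $ k \<le> 1 - (F ** A *v x) $ k)"
  by (simp add: less_eq_vec_def split_sum_all Gmat_def lvec_def matrix_vector_mul_component)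

lemma shifted_le_ones_iff:
  "F *v (A *v x + B *v v) \<le> ones \<longleftrightarrow> (\<forall>k. (F ** B *v v) $ k \<le> 1 - (F ** A *v x) $ k)"
  by (simp add: less_eq_ones_iff matrix_vector_right_distrib matrix_vector_mul_assoc algebra_simps)

lemma inj_Gmat_mult:
  assumes "inj ((*v) H)"
  shows "inj ((*v) (Gmat H F B))"
proof (rule injI)
  fix v w
  assume "Gmat H F B *v v = Gmat H F B *v w"
  then have "H *v v = H *v w"
    by (auto simp: vec_eq_iff matrix_vector_mul_component Gmat_def dest: spec[of _ "Inl _"])
  with assms show "v = w"
    by (rule injD)
qed

theorem proposition1:
  fixes F :: "real^'n^'p" and H :: "real^'m^'q"
    and A :: "real^'l \<Rightarrow> real^'n^'n" and B :: "real^'l \<Rightarrow> real^'m^'n"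
    and x :: "nat \<Rightarrow> real^'n" and \<delta> :: "nat \<Rightarrow> real^'l"
    and N K :: nat
  assumes nm: "CARD('m) \<le> CARD('n)"
    and S_cpoly: "c_polytope {y :: real^'n. F *v y \<le> ones}"
    and F_rank: "rank F = CARD('n)"
    and vertices: "{v. v extreme_point_of {y :: real^'n. F *v y \<le> ones}} = x ` {1..N}"
    and x_inj: "inj_on x {1..N}"
    and U_cpoly: "c_polytope {u :: real^'m. H *v u \<le> ones}"
    and H_rank: "rank H = CARD('m)"
    and L_nonempty: "\<exists>C :: nat \<Rightarrow> real^'l^'m. \<exists>d :: nat \<Rightarrow> real^'m.
        \<forall>i\<in>{1..N}. \<forall>j\<in>{1..K}.
          H *v (C i *v \<delta> j + d i) \<le> ones \<and>
          F *v (A (\<delta> j) *v x i + B (\<delta> j) *v (C i *v \<delta> j + d i)) \<le> ones"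
  shows "\<forall>i\<in>{1..N}. \<forall>j\<in>{1..K}. \<exists>(Q :: 'q set) (P :: 'p set) (\<sigma> :: 'm \<Rightarrow> 'q + 'p).
           bij_betw \<sigma> UNIV (Inl ` Q \<union> Inr ` P) \<and>
           invertible (submat (Gmat H F (B (\<delta> j))) \<sigma>) \<and>
           (let u = matrix_inv (submat (Gmat H F (B (\<delta> j))) \<sigma>)
                      *v subvec (lvec F (A (\<delta> j)) (x i)) \<sigma>
            in (\<forall>k. k \<notin> Q \<longrightarrow> (H *v u) $ k \<le> 1) \<and>
               (\<forall>k. k \<notin> P \<longrightarrow>
                   (F ** B (\<delta> j) *v u) $ k \<le> 1 - (F ** A (\<delta> j) *v x i) $ k))"
proof (intro ballI)
  fix i j
  assume "i \<in> {1..N}" and "j \<in> {1..K}"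
  let ?G = "Gmat H F (B (\<delta> j))" and ?l = "lvec F (A (\<delta> j)) (x i) :: real^('q + 'p)"
  obtain C d where "H *v (C i *v \<delta> j + d i) \<le> ones"
    "F *v (A (\<delta> j) *v x i + B (\<delta> j) *v (C i *v \<delta> j + d i)) \<le> ones"
    using L_nonempty \<open>i \<in> {1..N}\<close> \<open>j \<in> {1..K}\<close> by blast
  then have "?G *v (C i *v \<delta> j + d i) \<le> ?l"
    by (simp add: Gmat_mult_le_lvec_iff flip: less_eq_ones_iff shifted_le_ones_iff)
  moreover have "inj ((*v) ?G)"
    using H_rank by (simp add: full_rank_injective inj_Gmat_mult)
  ultimately obtain \<sigma> :: "'m \<Rightarrow> 'q + 'p" where "inj \<sigma>" "invertible (submat ?G \<sigma>)"
    "?G *v (matrix_inv (submat ?G \<sigma>) *v subvec ?l \<sigma>) \<le> ?l"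
    by (rule exists_basic_feasible_solution)
  moreover have "bij_betw \<sigma> UNIV (Inl ` (Inl -` range \<sigma>) \<union> Inr ` (Inr -` range \<sigma>))"
    using \<open>inj \<sigma>\<close> unfolding image_Inl_vimage_Un_image_Inr_vimage by (simp add: bij_betw_def)
  ultimately show "\<exists>Q P (\<sigma> :: 'm \<Rightarrow> 'q + 'p).
      bij_betw \<sigma> UNIV (Inl ` Q \<union> Inr ` P) \<and> invertible (submat ?G \<sigma>) \<and>
      (let u = matrix_inv (submat ?G \<sigma>) *v subvec ?l \<sigma>
       in (\<forall>k. k \<notin> Q \<longrightarrow> (H *v u) $ k \<le> 1) \<and>
          (\<forall>k. k \<notin> P \<longrightarrow> (F ** B (\<delta> j) *v u) $ k \<le> 1 - (F ** A (\<delta> j) *v x i) $ k))"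
    unfolding Let_def Gmat_mult_le_lvec_iff by blast
qed

end
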